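(* Let $n\ge1$ and let $A$ be a set with an $(n+1)$-ary operation $\theta$, binary operations $\alpha_1,\dots,\alpha_n$ and elements $e_1,\dots,e_n$ such that $\alpha_i(a,a)=e_i$ and $\theta(\alpha_1(a,b),\dots,\alpha_n(a,b),b)=a$ for all $a,b\in A$, and suppose $\theta$ is 2-associative, i.e. $\theta(a_1,\dots,a_n,\theta(b_1,\dots,b_n,c))=\theta(\theta(a_1,\dots,a_n,b_1),\dots,\theta(a_1,\dots,a_n,b_n),c)$ for all elements. Then the binary operation $ab=\theta(a,a,\dots,a,b)$ (with $a$ in the first $n$ arguments) is associative. *)

theory Defs
  imports Main
begin

text \<open>The (n+1)-ary operation theta is represented as a function taking a list of
  its first n arguments and the last argument.\<close>
definition diag_op :: "nat \<Rightarrow> ('a list \<Rightarrow> 'a \<Rightarrow> 'a) \<Rightarrow> 'a \<Rightarrow> 'a \<Rightarrow> 'a" where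
  "diag_op n \<theta> a b = \<theta> (replicate n a) b"

end

theory Submission
  imports Defs
begin

lemma diag_op_assoc:
  fixes \<theta> :: "'a list \<Rightarrow> 'a \<Rightarrow> 'a"
  assumes assoc2: "\<And>as bs c. length as = n \<Longrightarrow> set as \<subseteq> A \<Longrightarrow> length bs = n \<Longrightarrow> set bs \<subseteq> A
        \<Longrightarrow> c \<in> A \<Longrightarrow> \<theta> as (\<theta> bs c) = \<theta> (map (\<theta> as) bs) c"
    and "a \<in> A" "b \<in> A" "c \<in> A"
  shows "diag_op n \<theta> (diag_op n \<theta> a b) c = diag_op n \<theta> a (diag_op n \<theta> b c)"
proof -
  have "\<theta> (replicate n a) (\<theta> (replicate n b) c)
      = \<theta> (map (\<theta> (replicate n a)) (replicate n b)) c"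
    using assms by (intro assoc2) auto
  then show ?thesis
    by (simp add: diag_op_def)
qed

theorem lemma4p2:
  fixes n :: nat and A :: "'a set" and \<theta> :: "'a list \<Rightarrow> 'a \<Rightarrow> 'a"
    and \<alpha> :: "nat \<Rightarrow> 'a \<Rightarrow> 'a \<Rightarrow> 'a" and e :: "nat \<Rightarrow> 'a"
  assumes n: "n \<ge> 1"
    and theta_closed: "\<And>as c. length as = n \<Longrightarrow> set as \<subseteq> A \<Longrightarrow> c \<in> A \<Longrightarrow> \<theta> as c \<in> A"
    and alpha_closed: "\<And>i a b. i < n \<Longrightarrow> a \<in> A \<Longrightarrow> b \<in> A \<Longrightarrow> \<alpha> i a b \<in> A"
    and e_in: "\<And>i. i < n \<Longrightarrow> e i \<in> A"
    and alpha_diag: "\<And>i a. i < n \<Longrightarrow> a \<in> A \<Longrightarrow> \<alpha> i a a = e i"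
    and theta_alpha: "\<And>a b. a \<in> A \<Longrightarrow> b \<in> A \<Longrightarrow> \<theta> (map (\<lambda>i. \<alpha> i a b) [0..<n]) b = a"
    and assoc2: "\<And>as bs c. length as = n \<Longrightarrow> set as \<subseteq> A \<Longrightarrow> length bs = n \<Longrightarrow> set bs \<subseteq> A
        \<Longrightarrow> c \<in> A \<Longrightarrow> \<theta> as (\<theta> bs c) = \<theta> (map (\<lambda>b. \<theta> as b) bs) c"
  shows "\<forall>a\<in>A. \<forall>b\<in>A. \<forall>c\<in>A.
           diag_op n \<theta> (diag_op n \<theta> a b) c = diag_op n \<theta> a (diag_op n \<theta> b c)"
  using assoc2 by (blast intro: diag_op_assoc)

end
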